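(* Let $\alpha>0$, $\beta,\eta,\kappa\in\mathbb{R}$, $\rho>0$, $p\ge 1$, and $0\le a<x$. Let $f,g$ be two positive functions on $[0,\infty)$ with $f,g\in X^{p}_{c}(a,x)$ (for some $c\in\mathbb{R}$), such that ${}^{\rho}\mathcal{I}^{\alpha,\beta}_{a+,\eta,\kappa}f(x)<\infty$ and ${}^{\rho}\mathcal{I}^{\alpha,\beta}_{a+,\eta,\kappa}g(x)<\infty$. If there are real numbers $m,M>0$ with $0<m\leq \frac{f(t)}{g(t)}\leq M$ for all $t\in[a,x]$, then $$\frac{1}{M}\,{}^{\rho}\mathcal{I}^{\alpha,\beta}_{a+,\eta,\kappa}(fg)(x)\leq\frac{1}{(m+1)(M+1)}\,{}^{\rho}\mathcal{I}^{\alpha,\beta}_{a+,\eta,\kappa}(f+g)^{2}(x)\leq\frac{1}{m}\,{}^{\rho}\mathcal{I}^{\alpha,\beta}_{a+,\eta,\kappa}(fg)(x).$$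
   Context: For $c\in\mathbb{R}$ and $1\le p<\infty$, $X^{p}_{c}(a,b)$ denotes the space of Lebesgue measurable functions $f$ on $(a,b)$ with $\left(\int_a^b |t^{c}f(t)|^{p}\,\frac{dt}{t}\right)^{1/p}<\infty$. For $\alpha>0$, $\beta,\eta,\kappa\in\mathbb{R}$, $\rho>0$, $0\le a<x$, and a function $\varphi$, the generalized (Katugampola) fractional integral is $${}^{\rho}\mathcal{I}^{\alpha,\beta}_{a+,\eta,\kappa}\varphi(x)=\frac{\rho^{1-\beta}x^{\kappa}}{\Gamma(\alpha)}\int_{a}^{x}\frac{\tau^{\rho(\eta+1)-1}}{(x^{\rho}-\tau^{\rho})^{1-\alpha}}\varphi(\tau)\,d\tau,$$ whenever the integral exists. ${}^{\rho}\mathcal{I}^{\alpha,\beta}_{a+,\eta,\kappa}(fg)(x)$ and ${}^{\rho}\mathcal{I}^{\alpha,\beta}_{a+,\eta,\kappa}(f+g)^{2}(x)$ denote the operator applied to $\tau\mapsto f(\tau)g(\tau)$, resp. $\tau\mapsto(f(\tau)+g(\tau))^2$, evaluated at $x$. *)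

theory Defs
  imports "HOL-Analysis.Analysis"
begin

definition Xpc :: "real \<Rightarrow> real \<Rightarrow> real \<Rightarrow> real \<Rightarrow> (real \<Rightarrow> real) \<Rightarrow> bool" where
  "Xpc c p a b f \<longleftrightarrow>
     set_borel_measurable lebesgue {a<..<b} f \<and>
     set_integrable lebesgue {a<..<b} (\<lambda>t. \<bar>t powr c * f t\<bar> powr p / t)"

definition katu_kernel ::
  "real \<Rightarrow> real \<Rightarrow> real \<Rightarrow> real \<Rightarrow> (real \<Rightarrow> real) \<Rightarrow> real \<Rightarrow> real" where
  "katu_kernel \<rho> \<alpha> \<eta> x \<phi> \<tau> =
     \<tau> powr (\<rho> * (\<eta> + 1) - 1) / (x powr \<rho> - \<tau> powr \<rho>) powr (1 - \<alpha>) * \<phi> \<tau>"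

definition katu_int ::
  "real \<Rightarrow> real \<Rightarrow> real \<Rightarrow> real \<Rightarrow> real \<Rightarrow> real \<Rightarrow> (real \<Rightarrow> real) \<Rightarrow> real \<Rightarrow> real" where
  "katu_int \<rho> \<alpha> \<beta> a \<eta> \<kappa> \<phi> x =
     \<rho> powr (1 - \<beta>) * x powr \<kappa> / Gamma \<alpha> *
     (LINT \<tau>:{a<..<x}|lebesgue. katu_kernel \<rho> \<alpha> \<eta> x \<phi> \<tau>)"

definition katu_int_exists ::
  "real \<Rightarrow> real \<Rightarrow> real \<Rightarrow> real \<Rightarrow> (real \<Rightarrow> real) \<Rightarrow> real \<Rightarrow> bool" where
  "katu_int_exists \<rho> \<alpha> a \<eta> \<phi> x \<longleftrightarrow>
     set_integrable lebesgue {a<..<x} (katu_kernel \<rho> \<alpha> \<eta> x \<phi>)"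

end

theory Submission
  imports Defs
begin

text \<open>From \<open>m \<le> f/g \<le> M\<close> one gets \<open>(m+1) g \<le> f + g \<le> (M+1) g\<close> and
  \<open>(M+1) f / M \<le> f + g \<le> (m+1) f / m\<close>; multiplying these bounds gives
  \<open>(m+1)(M+1) f g / M \<le> (f+g)\<^sup>2 \<le> (m+1)(M+1) f g / m\<close> pointwise. The fractional
  integral has a nonnegative kernel and a positive constant factor, so it preserves
  such two-sided comparisons.\<close>

lemma set_borel_measurable_iff_restrict_space:
  fixes f :: "'a \<Rightarrow> 'b::real_normed_vector"
  assumes "S \<in> sets M"
  shows "set_borel_measurable M S f \<longleftrightarrow> f \<in> borel_measurable (restrict_space M S)"
  using assms sets.Int_space_eq2
  by (simp add: set_borel_measurable_def borel_measurable_restrict_space_iff)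

lemma set_integrable_iff_of_comparable:
  fixes u v :: "'a \<Rightarrow> real"
  assumes "set_borel_measurable M S u" "set_borel_measurable M S v"
    and "c > 0" "\<And>t. t \<in> S \<Longrightarrow> 0 \<le> v t \<and> c * v t \<le> u t \<and> u t \<le> d * v t"
  shows "set_integrable M S u \<longleftrightarrow> set_integrable M S v"
proof
  assume "set_integrable M S u"
  then have "set_integrable M S (\<lambda>t. u t / c)"
    by simp
  then show "set_integrable M S v"
  proof (rule set_integrable_bound[OF _ assms(2)], intro AE_I2 impI)
    fix t assume "t \<in> S"
    with assms(3) assms(4)[of t] show "norm (v t) \<le> norm (u t / c)"
      by (simp add: field_simps abs_if)
  qed
next
  assume "set_integrable M S v"
  then have "set_integrable M S (\<lambda>t. d * v t)"
    by simp
  then show "set_integrable M S u"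
  proof (rule set_integrable_bound[OF _ assms(1)], intro AE_I2 impI)
    fix t assume "t \<in> S"
    with assms(3) assms(4)[of t] show "norm (u t) \<le> norm (d * v t)"
      by (smt (verit) mult_nonneg_nonneg real_norm_def)
  qed
qed

text \<open>No integrability hypothesis is needed: comparable functions are integrable or not
  together, and in the latter case both integrals are \<open>0\<close> by convention.\<close>

lemma set_integral_comparable:
  fixes u v :: "'a \<Rightarrow> real"
  assumes "set_borel_measurable M S u" "set_borel_measurable M S v"
    and "c > 0" "\<And>t. t \<in> S \<Longrightarrow> 0 \<le> v t \<and> c * v t \<le> u t \<and> u t \<le> d * v t"
  shows "c * (LINT t:S|M. v t) \<le> (LINT t:S|M. u t) \<and> (LINT t:S|M. u t) \<le> d * (LINT t:S|M. v t)"
proof (cases "set_integrable M S v")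
  case True
  then have "set_integrable M S u"
    using set_integrable_iff_of_comparable[OF assms] by simp
  with True show ?thesis
    using assms(4)
    by (auto simp flip: set_integral_mult_right
             intro!: set_integral_mono)
next
  case False
  then have "\<not> set_integrable M S u"
    using set_integrable_iff_of_comparable[OF assms] by simp
  with False show ?thesis
    by (simp add: set_lebesgue_integral_def set_integrable_def not_integrable_integral_eq)
qed

lemma set_borel_measurable_katu_kernel:
  assumes "S \<in> sets lebesgue" "set_borel_measurable lebesgue S \<phi>"
  shows "set_borel_measurable lebesgue S (katu_kernel \<rho> \<alpha> \<eta> x \<phi>)"
proof -
  have "(\<lambda>\<tau>. \<tau> powr (\<rho> * (\<eta> + 1) - 1) / (x powr \<rho> - \<tau> powr \<rho>) powr (1 - \<alpha>))
      \<in> borel_measurable (restrict_space lebesgue S)"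
    by (intro measurable_restrict_space1 measurable_completion) simp
  with assms show ?thesis
    unfolding katu_kernel_def set_borel_measurable_iff_restrict_space[OF assms(1)]
    by (intro borel_measurable_times)
qed

lemma katu_kernel_comparable:
  assumes "0 \<le> \<psi> t \<and> c * \<psi> t \<le> \<phi> t \<and> \<phi> t \<le> d * \<psi> t"
  shows "0 \<le> katu_kernel \<rho> \<alpha> \<eta> x \<psi> t \<and> c * katu_kernel \<rho> \<alpha> \<eta> x \<psi> t \<le> katu_kernel \<rho> \<alpha> \<eta> x \<phi> t
    \<and> katu_kernel \<rho> \<alpha> \<eta> x \<phi> t \<le> d * katu_kernel \<rho> \<alpha> \<eta> x \<psi> t"
proof -
  define w where "w = t powr (\<rho> * (\<eta> + 1) - 1) / (x powr \<rho> - t powr \<rho>) powr (1 - \<alpha>)"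
  have "0 \<le> w" \<comment> \<open>real \<open>powr\<close> is never negative, whatever the signs of base and exponent\<close>
    by (simp add: w_def)
  then have "w * (c * \<psi> t) \<le> w * \<phi> t" "w * \<phi> t \<le> w * (d * \<psi> t)"
    using assms by (simp_all add: mult_left_mono)
  with \<open>0 \<le> w\<close> show ?thesis
    using assms unfolding katu_kernel_def w_def[symmetric]
    by (simp add: mult.left_commute)
qed

lemma katu_int_comparable:
  assumes "\<alpha> > 0" "c > 0"
    and "set_borel_measurable lebesgue {a<..<x} \<phi>" "set_borel_measurable lebesgue {a<..<x} \<psi>"
    and "\<And>t. t \<in> {a<..<x} \<Longrightarrow> 0 \<le> \<psi> t \<and> c * \<psi> t \<le> \<phi> t \<and> \<phi> t \<le> d * \<psi> t"
  shows "c * katu_int \<rho> \<alpha> \<beta> a \<eta> \<kappa> \<psi> x \<le> katu_int \<rho> \<alpha> \<beta> a \<eta> \<kappa> \<phi> x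
    \<and> katu_int \<rho> \<alpha> \<beta> a \<eta> \<kappa> \<phi> x \<le> d * katu_int \<rho> \<alpha> \<beta> a \<eta> \<kappa> \<psi> x"
proof -
  define K where "K = \<rho> powr (1 - \<beta>) * x powr \<kappa> / Gamma \<alpha>"
  have "0 \<le> K"
    using \<open>\<alpha> > 0\<close> by (simp add: K_def less_imp_le)
  have "c * (LINT t:{a<..<x}|lebesgue. katu_kernel \<rho> \<alpha> \<eta> x \<psi> t)
          \<le> (LINT t:{a<..<x}|lebesgue. katu_kernel \<rho> \<alpha> \<eta> x \<phi> t)
        \<and> (LINT t:{a<..<x}|lebesgue. katu_kernel \<rho> \<alpha> \<eta> x \<phi> t)
          \<le> d * (LINT t:{a<..<x}|lebesgue. katu_kernel \<rho> \<alpha> \<eta> x \<psi> t)"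
    using assms
    by (intro set_integral_comparable set_borel_measurable_katu_kernel katu_kernel_comparable) auto
  with \<open>0 \<le> K\<close> show ?thesis
    unfolding katu_int_def K_def[symmetric]
    by (metis mult.left_commute mult_left_mono)
qed

lemma sum_square_bounds_of_ratio_bounds:
  fixes f g m M :: real
  assumes "g > 0" "m > 0" "M > 0" "m \<le> f / g" "f / g \<le> M"
  shows "(m + 1) * (M + 1) / M * (f * g) \<le> (f + g)\<^sup>2
    \<and> (f + g)\<^sup>2 \<le> (m + 1) * (M + 1) / m * (f * g)"
proof -
  have mg: "m * g \<le> f" and Mg: "f \<le> M * g"
    using assms by (simp_all add: field_simps)
  have "f > 0"
    using mg \<open>g > 0\<close> \<open>m > 0\<close> by (smt (verit) mult_pos_pos)
  have "((m + 1) * g) * (f * (M + 1) / M) \<le> (f + g) * (f + g)"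
  proof (rule mult_mono)
    show "(m + 1) * g \<le> f + g"
      using mg by (simp add: algebra_simps)
    show "f * (M + 1) / M \<le> f + g"
      using Mg \<open>M > 0\<close> by (simp add: field_simps)
  qed (use \<open>f > 0\<close> \<open>g > 0\<close> \<open>M > 0\<close> in auto)
  moreover have "(f + g) * (f + g) \<le> ((M + 1) * g) * (f * (m + 1) / m)"
  proof (rule mult_mono)
    show "f + g \<le> (M + 1) * g"
      using Mg by (simp add: algebra_simps)
    show "f + g \<le> f * (m + 1) / m"
      using mg \<open>m > 0\<close> by (simp add: field_simps)
  qed (use \<open>f > 0\<close> \<open>g > 0\<close> \<open>M > 0\<close> in auto)
  ultimately show ?thesis
    by (simp add: power2_eq_square field_simps)
qed

theorem theorem14:
  fixes \<alpha> \<beta> \<eta> \<kappa> \<rho> p a x c m M :: real and f g :: "real \<Rightarrow> real"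
  assumes "\<alpha> > 0" and "\<rho> > 0" and "p \<ge> 1" and "0 \<le> a" and "a < x"
    and "\<And>t. t \<ge> 0 \<Longrightarrow> f t > 0" and "\<And>t. t \<ge> 0 \<Longrightarrow> g t > 0"
    and "Xpc c p a x f" and "Xpc c p a x g"
    and "katu_int_exists \<rho> \<alpha> a \<eta> f x" and "katu_int_exists \<rho> \<alpha> a \<eta> g x"
    and "m > 0" and "M > 0"
    and "\<And>t. t \<in> {a..x} \<Longrightarrow> m \<le> f t / g t \<and> f t / g t \<le> M"
  shows "1 / M * katu_int \<rho> \<alpha> \<beta> a \<eta> \<kappa> (\<lambda>t. f t * g t) x
           \<le> 1 / ((m + 1) * (M + 1)) * katu_int \<rho> \<alpha> \<beta> a \<eta> \<kappa> (\<lambda>t. (f t + g t)\<^sup>2) x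
       \<and> 1 / ((m + 1) * (M + 1)) * katu_int \<rho> \<alpha> \<beta> a \<eta> \<kappa> (\<lambda>t. (f t + g t)\<^sup>2) x
           \<le> 1 / m * katu_int \<rho> \<alpha> \<beta> a \<eta> \<kappa> (\<lambda>t. f t * g t) x"
proof -
  let ?S = "{a<..<x} :: real set"
  let ?A = "(m + 1) * (M + 1)"
  let ?I = "katu_int \<rho> \<alpha> \<beta> a \<eta> \<kappa>"
  have "?S \<in> sets lebesgue"
    by simp
  moreover from this \<open>Xpc c p a x f\<close> \<open>Xpc c p a x g\<close>
  have "f \<in> borel_measurable (restrict_space lebesgue ?S)"
      "g \<in> borel_measurable (restrict_space lebesgue ?S)"
    by (simp_all add: Xpc_def set_borel_measurable_iff_restrict_space)
  ultimately have "set_borel_measurable lebesgue ?S (\<lambda>t. (f t + g t)\<^sup>2)"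
      "set_borel_measurable lebesgue ?S (\<lambda>t. f t * g t)"
    by (simp_all add: set_borel_measurable_iff_restrict_space)
  moreover have "0 \<le> f t * g t \<and> ?A / M * (f t * g t) \<le> (f t + g t)\<^sup>2
      \<and> (f t + g t)\<^sup>2 \<le> ?A / m * (f t * g t)" if "t \<in> ?S" for t
    using that assms(4,12,13) assms(6,7,14)[of t]
    by (intro conjI sum_square_bounds_of_ratio_bounds[THEN conjunct1]
          sum_square_bounds_of_ratio_bounds[THEN conjunct2]) auto
  ultimately have "?A / M * ?I (\<lambda>t. f t * g t) x \<le> ?I (\<lambda>t. (f t + g t)\<^sup>2) x
      \<and> ?I (\<lambda>t. (f t + g t)\<^sup>2) x \<le> ?A / m * ?I (\<lambda>t. f t * g t) x"
    using assms by (intro katu_int_comparable) auto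
  moreover have "?A > 0"
    using assms by simp
  ultimately show ?thesis
    by (auto simp: field_simps)
qed

end
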